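(* Let $\mathcal{X}$ and $\mathcal{S}(\beta)$ be as defined in the context, let $\alpha\in(0,1)$, and let $\theta=\lfloor\alpha|H_K|\rfloor$. Assume the minimum $$\beta^*=\min\{\beta\ge0:\ \exists (x,\underline d,y)\in\mathcal{S}(\beta)\text{ with }\|y\|_0\le\theta\}$$ exists. For $\Theta\ge0$ let (P$_\Theta$) be the linear program of maximizing $\underline d$ over $(x,\underline d,y)\in\mathcal{X}$ subject to the budget constraint $\sum_{v\in H_K}y_v\le\Theta$, and assume (P$_\Theta$) has an optimal solution for the values of $\Theta$ below. Let $\lambda_u\ge0$ be an optimal dual variable (Lagrange multiplier) of the budget constraint in (P$_0$), and, for $\epsilon>0$, let $\lambda_l\ge0$ be an optimal dual variable of the budget constraint in (P$_\Theta$) with $\Theta=\theta(\hat d_K-\bar d_K)+\epsilon$. Then $\lambda_l\le\beta^*\le\lambda_u$.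
   Context: Setting: $[m]=T\cup H_1\cup\dots\cup H_K$ is a disjoint partition with $T\ne\emptyset$; $D\in\mathbb{R}^{m\times n}$ is entrywise nonnegative and $d_v(x)=\sum_i D_{vi}x_i$; $\mu>1$; $\bar d_1,\dots,\bar d_K$ and $\hat d_K>\bar d_K$ are real; $\underline\phi_v,\bar\phi_v\in[0,1]$ ($v\in T$) and $\gamma_{uv}\ge0$ are given constants. $\mathcal{X}$ is the set of $(x,\underline d,y)\in\mathbb{R}^n_+\times\mathbb{R}\times\mathbb{R}^{H_K}_+$ satisfying: $\underline\phi_v d_v(x)\ge\underline d$ ($v\in T$); $\bar\phi_v d_v(x)-\mu\max\{\bar\phi_v-\gamma_{vu},\underline\phi_u\}d_u(x)\le0$ and $\min\{\underline\phi_u+\gamma_{vu},\bar\phi_v\}d_v(x)-\mu\underline\phi_u d_u(x)\le0$ ($u\ne v\in T$); $d_v(x)\le\bar d_k$ ($k\in[K-1]$, $v\in H_k$); $d_v(x)-y_v\le\bar d_K$ and $y_v\le\hat d_K-\bar d_K$ ($v\in H_K$). For $\beta\ge0$, $\mathcal{S}(\beta)=\arg\max\{\underline d-\beta\sum_{v\in H_K}y_v:(x,\underline d,y)\in\mathcal{X}\}$. $\|y\|_0$ is the number of nonzero components of $y$. An optimal dual variable $\lambda\ge0$ of the budget constraint in (P$_\Theta$) means $\lambda\Theta+\max_{\mathcal{X}}\{\underline d-\lambda\sum_{v}y_v\}=\min_{\beta\ge0}\big(\beta\Theta+\max_{\mathcal{X}}\{\underline d-\beta\sum_v y_v\}\big)$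 equals the optimal value of (P$_\Theta$). *)

theory Defs
  imports Main "HOL.Real"
begin

text \<open>A point of the feasible set is a triple (x, dl, y) with x : 'i \<Rightarrow> real,
  dl : real, and y : 'v \<Rightarrow> real, where y is supported on H K (an element of R^(H_K)).\<close>

definition dval :: "('v \<Rightarrow> 'i::finite \<Rightarrow> real) \<Rightarrow> ('i \<Rightarrow> real) \<Rightarrow> 'v \<Rightarrow> real" where
  "dval D x v = (\<Sum>i\<in>UNIV. D v i * x i)"

definition Xset ::
  "'v set \<Rightarrow> (nat \<Rightarrow> 'v set) \<Rightarrow> nat \<Rightarrow> ('v \<Rightarrow> 'i::finite \<Rightarrow> real) \<Rightarrow> real
   \<Rightarrow> (nat \<Rightarrow> real) \<Rightarrow> real \<Rightarrow> ('v \<Rightarrow> real) \<Rightarrow> ('v \<Rightarrow> real) \<Rightarrow> ('v \<Rightarrow> 'v \<Rightarrow> real)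
   \<Rightarrow> (('i \<Rightarrow> real) \<times> real \<times> ('v \<Rightarrow> real)) set" where
  "Xset T H K D \<mu> dbar dhat phil phiu \<gamma> =
    {(x, dl, y). (\<forall>i. x i \<ge> 0)
      \<and> (\<forall>v. v \<notin> H K \<longrightarrow> y v = 0)
      \<and> (\<forall>v\<in>H K. y v \<ge> 0)
      \<and> (\<forall>v\<in>T. phil v * dval D x v \<ge> dl)
      \<and> (\<forall>u\<in>T. \<forall>v\<in>T. u \<noteq> v \<longrightarrow>
            phiu v * dval D x v - \<mu> * max (phiu v - \<gamma> v u) (phil u) * dval D x u \<le> 0
          \<and> min (phil u + \<gamma> v u) (phiu v) * dval D x v - \<mu> * phil u * dval D x u \<le> 0)
      \<and> (\<forall>k\<in>{1..<K}. \<forall>v\<in>H k. dval D x v \<le> dbar k)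
      \<and> (\<forall>v\<in>H K. dval D x v - y v \<le> dbar K \<and> y v \<le> dhat - dbar K)}"

definition pobj :: "'v set \<Rightarrow> real \<Rightarrow> ('i \<Rightarrow> real) \<times> real \<times> ('v \<Rightarrow> real) \<Rightarrow> real" where
  "pobj HK \<beta> p = (case p of (x, dl, y) \<Rightarrow> dl - \<beta> * (\<Sum>v\<in>HK. y v))"

definition Sset :: "'a set \<Rightarrow> ('a \<Rightarrow> real) \<Rightarrow> 'a set" where
  "Sset X f = {p \<in> X. \<forall>q\<in>X. f q \<le> f p}"

definition norm0 :: "'v set \<Rightarrow> ('v \<Rightarrow> real) \<Rightarrow> nat" where
  "norm0 HK y = card {v\<in>HK. y v \<noteq> 0}"

definition optP :: "'v set \<Rightarrow> (('i \<Rightarrow> real) \<times> real \<times> ('v \<Rightarrow> real)) set \<Rightarrow> real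
    \<Rightarrow> ('i \<Rightarrow> real) \<times> real \<times> ('v \<Rightarrow> real) \<Rightarrow> bool" where
  "optP HK X \<Theta> p \<longleftrightarrow> p \<in> X \<and> (\<Sum>v\<in>HK. snd (snd p) v) \<le> \<Theta>
     \<and> (\<forall>q\<in>X. (\<Sum>v\<in>HK. snd (snd q) v) \<le> \<Theta> \<longrightarrow> fst (snd q) \<le> fst (snd p))"

text \<open>lam is an optimal dual variable of the budget constraint of (P_Theta):
  lam \<ge> 0, the maximum M of the penalized objective with beta = lam over X is attained,
  lam*Theta + M is \<le> beta*Theta + sup_X (penalized objective with beta) for every beta \<ge> 0
  (i.e. lam attains the minimum over beta \<ge> 0), and lam*Theta + M equals the optimal value
  of (P_Theta).\<close>
definition opt_dual :: "'v set \<Rightarrow> (('i \<Rightarrow> real) \<times> real \<times> ('v \<Rightarrow> real)) set \<Rightarrow> real \<Rightarrow> real \<Rightarrow> bool" where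
  "opt_dual HK X \<Theta> lam \<longleftrightarrow> lam \<ge> 0 \<and>
     (\<exists>p\<in>Sset X (pobj HK lam).
        (\<forall>\<beta>\<ge>0. \<forall>e>0. \<exists>q\<in>X. lam * \<Theta> + pobj HK lam p - e \<le> \<beta> * \<Theta> + pobj HK \<beta> q)
      \<and> (\<exists>s. optP HK X \<Theta> s \<and> lam * \<Theta> + pobj HK lam p = fst (snd s)))"

end

theory Submission
  imports Defs
begin

text \<open>Both bounds compare the Lagrangian of the budget constraint at two multipliers.
  If a maximiser for beta* spends strictly less than the budget Theta (true for
  Theta = theta (dhat - dbar K) + eps, since at most theta components of y are nonzero
  and each is at most dhat - dbar K), then the dual function at lambda exceeds the one
  at beta* by at least (lambda - beta*)(Theta - sum y), so optimality of lambda_l forces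
  lambda_l \<le> beta*. For Theta = 0, strong duality turns the optimal solution of (P_0),
  whose y vanishes, into a maximiser for lambda_u with no nonzero component of y, so
  beta* \<le> lambda_u by minimality of beta*.\<close>

lemma pobj_simp [simp]: "pobj HK \<beta> (x, dl, y) = dl - \<beta> * (\<Sum>v\<in>HK. y v)"
  by (simp add: pobj_def)

lemma sum_le_norm0_mult:
  fixes y :: "'v \<Rightarrow> real"
  assumes "finite A" "\<forall>v\<in>A. y v \<le> c"
  shows "(\<Sum>v\<in>A. y v) \<le> real (norm0 A y) * c"
proof -
  have "(\<Sum>v\<in>A. y v) = (\<Sum>v\<in>{v\<in>A. y v \<noteq> 0}. y v)"
    by (rule sum.mono_neutral_left[symmetric]) (use assms in auto)
  also have "\<dots> \<le> real (card {v\<in>A. y v \<noteq> 0}) * c"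
    by (rule sum_bounded_above) (use assms in auto)
  finally show ?thesis by (simp add: norm0_def)
qed

lemma Xset_slack_bounds:
  assumes "(x, dl, y) \<in> Xset T H K D \<mu> dbar dhat phil phiu \<gamma>" "v \<in> H K"
  shows "0 \<le> y v" "y v \<le> dhat - dbar K"
  using assms unfolding Xset_def by auto

lemma opt_dual_le_if_maximiser_under_budget:
  assumes dual: "opt_dual HK X \<Theta> lam"
    and "\<beta> \<ge> 0" and max\<beta>: "(x, dl, y) \<in> Sset X (pobj HK \<beta>)"
    and under: "(\<Sum>v\<in>HK. y v) < \<Theta>"
  shows "lam \<le> \<beta>"
proof (rule ccontr)
  assume "\<not> lam \<le> \<beta>"
  define gap where "gap = (lam - \<beta>) * (\<Theta> - (\<Sum>v\<in>HK. y v))"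
  have "gap > 0" unfolding gap_def using \<open>\<not> lam \<le> \<beta>\<close> under by simp
  obtain p where maxlam: "p \<in> Sset X (pobj HK lam)"
    and dual_min: "\<forall>\<beta>\<ge>0. \<forall>e>0. \<exists>q\<in>X. lam * \<Theta> + pobj HK lam p - e \<le> \<beta> * \<Theta> + pobj HK \<beta> q"
    using dual unfolding opt_dual_def by blast
  obtain q where "q \<in> X" and q: "lam * \<Theta> + pobj HK lam p - gap / 2 \<le> \<beta> * \<Theta> + pobj HK \<beta> q"
    using dual_min \<open>\<beta> \<ge> 0\<close> \<open>gap > 0\<close> by (meson half_gt_zero)
  have "(x, dl, y) \<in> X" using max\<beta> unfolding Sset_def by auto
  then have "pobj HK lam (x, dl, y) \<le> pobj HK lam p"
    using maxlam unfolding Sset_def by auto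
  moreover have "pobj HK \<beta> q \<le> pobj HK \<beta> (x, dl, y)"
    using max\<beta> \<open>q \<in> X\<close> unfolding Sset_def by auto
  ultimately have "lam * \<Theta> + pobj HK lam (x, dl, y) - gap / 2 \<le> \<beta> * \<Theta> + pobj HK \<beta> (x, dl, y)"
    using q by linarith
  then have "(lam - \<beta>) * (\<Theta> - (\<Sum>v\<in>HK. y v)) \<le> gap / 2" by (simp add: algebra_simps)
  with \<open>gap > 0\<close> show False unfolding gap_def by linarith
qed

lemma opt_dual_zero_budget_maximiser:
  assumes dual: "opt_dual HK X 0 lam" and "finite HK"
    and nonneg: "\<And>x dl y v. (x, dl, y) \<in> X \<Longrightarrow> v \<in> HK \<Longrightarrow> 0 \<le> y v"
  shows "\<exists>s\<in>Sset X (pobj HK lam). norm0 HK (snd (snd s)) = 0"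
proof -
  obtain p s where maxlam: "p \<in> Sset X (pobj HK lam)" and "optP HK X 0 s"
    and strong: "pobj HK lam p = fst (snd s)"
    using dual unfolding opt_dual_def by auto
  obtain x dl y where s: "s = (x, dl, y)" by (cases s) auto
  have "s \<in> X" and "(\<Sum>v\<in>HK. y v) \<le> 0"
    using \<open>optP HK X 0 s\<close> s unfolding optP_def by auto
  moreover have "\<forall>v\<in>HK. 0 \<le> y v" using nonneg \<open>s \<in> X\<close> s by blast
  ultimately have y0: "\<forall>v\<in>HK. y v = 0"
    using sum_nonneg_eq_0_iff[OF \<open>finite HK\<close>, of y] sum_nonneg[of HK y] by auto
  have "pobj HK lam s = pobj HK lam p" using strong s y0 by simp
  then have "s \<in> Sset X (pobj HK lam)"
    using maxlam \<open>s \<in> X\<close> unfolding Sset_def by auto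
  moreover have "norm0 HK (snd (snd s)) = 0"
    unfolding s norm0_def using y0 by (metis (mono_tags, lifting) card.empty empty_Collect_eq snd_conv)
  ultimately show ?thesis by blast
qed

theorem lemmaB1:
  fixes T :: "'v::finite set" and H :: "nat \<Rightarrow> 'v set" and K :: nat
    and D :: "'v \<Rightarrow> 'i::finite \<Rightarrow> real" and \<mu> :: real
    and dbar :: "nat \<Rightarrow> real" and dhat :: real
    and phil phiu :: "'v \<Rightarrow> real" and \<gamma> :: "'v \<Rightarrow> 'v \<Rightarrow> real"
    and \<alpha> \<epsilon> \<beta>star lam_u lam_l :: real and \<theta> :: nat
  defines "X \<equiv> Xset T H K D \<mu> dbar dhat phil phiu \<gamma>"
  assumes K: "K \<ge> 1"
    and partition: "T \<union> (\<Union>k\<in>{1..K}. H k) = UNIV"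
    and disjT: "\<forall>k\<in>{1..K}. T \<inter> H k = {}"
    and disjH: "\<forall>k\<in>{1..K}. \<forall>l\<in>{1..K}. k \<noteq> l \<longrightarrow> H k \<inter> H l = {}"
    and Tne: "T \<noteq> {}"
    and Dnn: "\<forall>v i. D v i \<ge> 0"
    and mu: "\<mu> > 1"
    and dhat: "dhat > dbar K"
    and phil: "\<forall>v\<in>T. 0 \<le> phil v \<and> phil v \<le> 1"
    and phiu: "\<forall>v\<in>T. 0 \<le> phiu v \<and> phiu v \<le> 1"
    and gamma: "\<forall>u v. \<gamma> u v \<ge> 0"
    and alpha: "0 < \<alpha>" "\<alpha> < 1"
    and theta: "\<theta> = nat \<lfloor>\<alpha> * real (card (H K))\<rfloor>"
    and bstar_in: "\<beta>star \<ge> 0 \<and> (\<exists>p\<in>Sset X (pobj (H K) \<beta>star). norm0 (H K) (snd (snd p)) \<le> \<theta>)"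
    and bstar_min: "\<forall>\<beta>\<ge>0. (\<exists>p\<in>Sset X (pobj (H K) \<beta>). norm0 (H K) (snd (snd p)) \<le> \<theta>)
                       \<longrightarrow> \<beta>star \<le> \<beta>"
    and eps: "\<epsilon> > 0"
    and P0: "\<exists>p. optP (H K) X 0 p"
    and PTh: "\<exists>p. optP (H K) X (real \<theta> * (dhat - dbar K) + \<epsilon>) p"
    and lu: "opt_dual (H K) X 0 lam_u"
    and ll: "opt_dual (H K) X (real \<theta> * (dhat - dbar K) + \<epsilon>) lam_l"
  shows "lam_l \<le> \<beta>star \<and> \<beta>star \<le> lam_u"
proof
  obtain x dl y where max\<beta>star: "(x, dl, y) \<in> Sset X (pobj (H K) \<beta>star)"
    and sparse: "norm0 (H K) y \<le> \<theta>"
    using bstar_in by fastforce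
  have "(x, dl, y) \<in> X" using max\<beta>star unfolding Sset_def by auto
  then have "(\<Sum>v\<in>H K. y v) \<le> real (norm0 (H K) y) * (dhat - dbar K)"
    using Xset_slack_bounds(2) unfolding X_def by (intro sum_le_norm0_mult) auto
  also have "\<dots> \<le> real \<theta> * (dhat - dbar K)"
    using sparse dhat by (intro mult_right_mono) auto
  finally have "(\<Sum>v\<in>H K. y v) < real \<theta> * (dhat - dbar K) + \<epsilon>" using eps by linarith
  then show "lam_l \<le> \<beta>star"
    using opt_dual_le_if_maximiser_under_budget[OF ll _ max\<beta>star] bstar_in by blast
next
  have "\<exists>s\<in>Sset X (pobj (H K) lam_u). norm0 (H K) (snd (snd s)) = 0"
    using lu Xset_slack_bounds(1) unfolding X_def
    by (intro opt_dual_zero_budget_maximiser) auto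
  moreover have "lam_u \<ge> 0" using lu unfolding opt_dual_def by simp
  ultimately show "\<beta>star \<le> lam_u" using bstar_min by fastforce
qed

end
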